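(* Let $X$ be a real Hilbert space, $\mathsf{A}:X\to 2^X$ a maximal monotone operator whose zero set $S$ is nonempty, and $J:=(Id+\mathsf{A})^{-1}$. Let $x_0\in X$, $p\in S$ and $N\in\mathbb{N}\setminus\{0\}$ with $N\geq 2\|x_0-p\|$. For every $k\in\mathbb{N}$ and every monotone function $f:\mathbb{N}\to\mathbb{N}$ there exist $n\leq 24N\big(w_{f,N}^{(R)}(0)+1\big)^2$ and $x\in B_N$ such that $$\|J(x)-x\|\leq\frac{1}{f(n)+1}\quad\text{and}\quad\forall y\in B_N\ \left(\|J(y)-y\|\leq\frac{1}{n+1}\ \to\ \langle x_0-x,\,y-x\rangle\leq\frac{1}{k+1}\right),$$ where $R:=4N^4(k+1)^2$ and $w_{f,N}(m):=\max\{f(24N(m+1)^2),\,24N(m+1)^2\}$.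
   Context: $S:=\{x\in X: 0\in\mathsf{A}(x)\}$. The resolvent $J=(Id+\mathsf A)^{-1}$ is a single-valued nonexpansive map on $X$ whose fixed point set is $S$. $B_N:=\{x\in X:\ \|x-p\|\leq N\}$. A function $f:\mathbb{N}\to\mathbb{N}$ is monotone if $f(n)\leq f(n+1)$ for all $n$. $g^{(R)}$ is the $R$-fold composition of $g$ with itself ($g^{(0)}$ the identity). *)

theory Defs
  imports "HOL-Analysis.Analysis"
begin

definition monotone_op :: "('a::real_inner \<Rightarrow> 'a set) \<Rightarrow> bool" where
  "monotone_op A \<longleftrightarrow>
     (\<forall>x y u v. u \<in> A x \<longrightarrow> v \<in> A y \<longrightarrow> inner (x - y) (u - v) \<ge> 0)"

definition maximal_monotone :: "('a::real_inner \<Rightarrow> 'a set) \<Rightarrow> bool" where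
  "maximal_monotone A \<longleftrightarrow> monotone_op A \<and>
     (\<forall>B. monotone_op B \<and> (\<forall>x. A x \<subseteq> B x) \<longrightarrow> B = A)"

definition zeros :: "('a::real_inner \<Rightarrow> 'a set) \<Rightarrow> 'a set" where
  "zeros A = {x. 0 \<in> A x}"

text \<open>Resolvent J = (Id + A)^{-1}: J x is the (unique, for maximal monotone A)
  y with x \<in> y + A y, i.e. x - y \<in> A y.\<close>
definition resolvent :: "('a::real_inner \<Rightarrow> 'a set) \<Rightarrow> 'a \<Rightarrow> 'a" where
  "resolvent A x = (THE y. x - y \<in> A y)"

definition w_fun :: "(nat \<Rightarrow> nat) \<Rightarrow> nat \<Rightarrow> nat \<Rightarrow> nat" where
  "w_fun f N m = max (f (24 * N * (m + 1)^2)) (24 * N * (m + 1)^2)"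

end

theory Submission
  imports Defs
begin

text \<open>
  The resolvent is everywhere defined by Minty's theorem, which amounts to finding, for a
  monotone set \<open>G\<close>, a point \<open>x\<close> with \<open>inner (x - y) (x + v) \<le> 0\<close> for all \<open>(y, v) \<in> G\<close>.
  For finite \<open>G\<close> such a point comes from minimising \<open>norm ((a - b) / 2)\<^sup>2 + s\<close> over the convex
  hull of the lifted points \<open>(y, v, inner y v)\<close>. In general each constraint describes a closed
  ball, all finite intersections are nonempty, and by the parallelogram law near-minimal-norm
  points of a refining chain of these intersections converge to a common point.

  Quantitatively only nonexpansiveness of \<open>J\<close> and \<open>J p = p\<close> matter. Let \<open>d m\<close> be the squared
  distance from \<open>x0\<close> to the points \<open>y\<close> of \<open>B\<^sub>N\<close> with \<open>norm (J y - y) \<le> 1 / (m + 1)\<close>. Along the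
  iterates \<open>(w ^^ i) 0\<close> these values stay in \<open>[0, N\<^sup>2/4]\<close>, so one of the first \<open>R\<close> increments
  is at most \<open>N\<^sup>2/(4R)\<close>. Let \<open>x\<close> almost minimise the distance at the upper level. For an
  approximate fixed point \<open>y\<close>, nonexpansiveness keeps the segment from \<open>x\<close> to \<open>y\<close> approximately
  fixed at the lower level, so its points are not much closer to \<open>x0\<close> than \<open>x\<close> is, and this
  gives the variational inequality.
\<close>

section \<open>Monotone sets\<close>

definition monotone_set :: "('a::real_inner \<times> 'a) set \<Rightarrow> bool" where
  "monotone_set G \<longleftrightarrow> (\<forall>(y, v)\<in>G. \<forall>(y', v')\<in>G. 0 \<le> inner (y - y') (v - v'))"

lemma monotone_setD:
  "monotone_set G \<Longrightarrow> (y, v) \<in> G \<Longrightarrow> (y', v') \<in> G \<Longrightarrow> 0 \<le> inner (y - y') (v - v')"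
  unfolding monotone_set_def by blast

lemma monotone_set_subset: "monotone_set G \<Longrightarrow> F \<subseteq> G \<Longrightarrow> monotone_set F"
  unfolding monotone_set_def by blast

lemma nonneg_of_nonneg_near_zero:
  fixes \<alpha> \<beta> :: real
  assumes "0 \<le> \<beta>" and "\<And>t. 0 < t \<Longrightarrow> t \<le> 1 \<Longrightarrow> 0 \<le> t * \<alpha> + t\<^sup>2 * \<beta>"
  shows "0 \<le> \<alpha>"
proof (rule ccontr)
  assume "\<not> 0 \<le> \<alpha>"
  define t where "t = min 1 (-\<alpha> / (2 * (\<beta> + 1)))"
  have t: "0 < t" "t \<le> 1" using \<open>\<not> 0 \<le> \<alpha>\<close> assms(1) by (auto simp: t_def field_simps)
  have "t * \<beta> \<le> -\<alpha> / (2 * (\<beta> + 1)) * \<beta>"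
    using assms(1) by (intro mult_right_mono) (auto simp: t_def)
  also have "\<dots> \<le> -\<alpha> / 2"
    using \<open>\<not> 0 \<le> \<alpha>\<close> assms(1) by (simp add: field_simps)
  finally have "t * (\<alpha> + t * \<beta>) < 0"
    using \<open>\<not> 0 \<le> \<alpha>\<close> t by (intro mult_pos_neg) auto
  with assms(2)[OF t] show False
    by (simp add: algebra_simps power2_eq_square)
qed

lemma norm_add_scaleR_sq:
  fixes w d :: "'a::real_inner"
  shows "(norm (w + t *\<^sub>R d))\<^sup>2 = (norm w)\<^sup>2 + 2 * t * inner w d + t\<^sup>2 * (norm d)\<^sup>2"
  unfolding power2_norm_eq_inner
  by (simp add: inner_add_left inner_add_right inner_commute algebra_simps power2_eq_square)

lemma linear_quadratic_min_first_order:
  fixes L :: "'a::real_vector \<Rightarrow> 'b::real_inner" and \<sigma> :: "'a \<Rightarrow> real"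
  assumes "linear L" "linear \<sigma>" "convex H" "q \<in> H" "q' \<in> H"
    and min: "\<And>z. z \<in> H \<Longrightarrow> (norm (L q))\<^sup>2 + \<sigma> q \<le> (norm (L z))\<^sup>2 + \<sigma> z"
  shows "0 \<le> 2 * inner (L q) (L q' - L q) + (\<sigma> q' - \<sigma> q)"
proof (rule nonneg_of_nonneg_near_zero[where \<beta> = "(norm (L q' - L q))\<^sup>2"])
  fix t :: real assume t: "0 < t" "t \<le> 1"
  define z where "z = q + t *\<^sub>R (q' - q)"
  have "z \<in> H"
    using convexD[OF assms(3,4,5), of "1 - t" t] t by (simp add: z_def algebra_simps)
  moreover have "L z = L q + t *\<^sub>R (L q' - L q)" "\<sigma> z = \<sigma> q + t * (\<sigma> q' - \<sigma> q)"
    using assms(1,2) by (simp_all add: z_def linear_add linear_scale linear_diff)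
  ultimately have "(norm (L q))\<^sup>2 + \<sigma> q \<le> (norm (L q))\<^sup>2 + 2 * t * inner (L q) (L q' - L q)
      + t\<^sup>2 * (norm (L q' - L q))\<^sup>2 + (\<sigma> q + t * (\<sigma> q' - \<sigma> q))"
    using min[of z] by (simp add: norm_add_scaleR_sq)
  then show "0 \<le> t * (2 * inner (L q) (L q' - L q) + (\<sigma> q' - \<sigma> q))
      + t\<^sup>2 * (norm (L q' - L q))\<^sup>2"
    by (simp add: algebra_simps)
qed simp

lemma convex_combination_inner_le:
  fixes y v :: "'i \<Rightarrow> 'a::real_inner"
  assumes "finite I" "\<And>i. i \<in> I \<Longrightarrow> 0 \<le> u i" "sum u I = 1"
    and mon: "\<And>i j. i \<in> I \<Longrightarrow> j \<in> I \<Longrightarrow> 0 \<le> inner (y i - y j) (v i - v j)"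
  shows "inner (\<Sum>i\<in>I. u i *\<^sub>R y i) (\<Sum>i\<in>I. u i *\<^sub>R v i) \<le> (\<Sum>i\<in>I. u i * inner (y i) (v i))"
proof -
  define S where "S = (\<Sum>i\<in>I. u i * inner (y i) (v i))"
  define P where "P = (\<Sum>i\<in>I. \<Sum>j\<in>I. u i * u j * inner (y i) (v j))"
  have "0 \<le> (\<Sum>i\<in>I. \<Sum>j\<in>I. u i * u j * inner (y i - y j) (v i - v j))"
    using assms(2) mon by (intro sum_nonneg mult_nonneg_nonneg) auto
  also have "\<dots> = (\<Sum>i\<in>I. \<Sum>j\<in>I. u j * (u i * inner (y i) (v i)))
      + (\<Sum>i\<in>I. \<Sum>j\<in>I. u i * (u j * inner (y j) (v j)))
      - (\<Sum>i\<in>I. \<Sum>j\<in>I. u i * u j * inner (y i) (v j))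
      - (\<Sum>i\<in>I. \<Sum>j\<in>I. u j * u i * inner (y j) (v i))"
    by (simp only: sum.distrib[symmetric] sum_subtractf[symmetric])
       (intro sum.cong refl, simp add: inner_diff_left inner_diff_right algebra_simps)
  also have "\<dots> = 2 * S - 2 * P"
  proof -
    have "(\<Sum>i\<in>I. \<Sum>j\<in>I. u j * (u i * inner (y i) (v i))) = S"
      by (simp add: S_def assms(3) sum_distrib_right[symmetric])
    moreover have "(\<Sum>i\<in>I. \<Sum>j\<in>I. u i * (u j * inner (y j) (v j))) = S"
      by (simp add: S_def assms(3) sum_distrib_left[symmetric] sum_distrib_right[symmetric])
    moreover have "(\<Sum>i\<in>I. \<Sum>j\<in>I. u j * u i * inner (y j) (v i)) = P"
      unfolding P_def by (rule sum.swap)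
    ultimately show ?thesis by (simp add: P_def)
  qed
  finally have "P \<le> S" by simp
  moreover have "inner (\<Sum>i\<in>I. u i *\<^sub>R y i) (\<Sum>j\<in>I. u j *\<^sub>R v j) = P"
    unfolding P_def inner_sum_left inner_scaleR_left inner_sum_right inner_scaleR_right
    by (simp only: sum_distrib_left mult.assoc) (subst sum.swap, simp add: mult.left_commute)
  ultimately show ?thesis by (simp add: S_def)
qed

lemma convex_hull_inner_lift_above:
  fixes F :: "('a::real_inner \<times> 'a) set"
  assumes "finite F" "monotone_set F"
    and "(a, b, s) \<in> convex hull ((\<lambda>(y, v). (y, v, inner y v)) ` F)"
  shows "inner a b \<le> s"
proof -
  define Q where "Q = (\<lambda>(y, v). (y, v, inner y v)) ` F"
  have "finite Q" using assms(1) by (simp add: Q_def)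
  then obtain u where u0: "\<And>q. q \<in> Q \<Longrightarrow> 0 \<le> u q" and u1: "sum u Q = 1"
    and us: "(\<Sum>q\<in>Q. u q *\<^sub>R q) = (a, b, s)"
    using assms(3) unfolding Q_def[symmetric] convex_hull_finite[OF \<open>finite Q\<close>] by blast
  have "a = (\<Sum>q\<in>Q. u q *\<^sub>R fst q)" "b = (\<Sum>q\<in>Q. u q *\<^sub>R fst (snd q))"
    "s = (\<Sum>q\<in>Q. u q * snd (snd q))"
    using arg_cong[OF us, of fst] arg_cong[OF us, of "\<lambda>q. fst (snd q)"]
      arg_cong[OF us, of "\<lambda>q. snd (snd q)"]
    by (simp_all add: fst_sum snd_sum)
  moreover have "(\<Sum>q\<in>Q. u q * snd (snd q)) = (\<Sum>q\<in>Q. u q * inner (fst q) (fst (snd q)))"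
    by (rule sum.cong) (auto simp: Q_def)
  moreover have "inner (\<Sum>q\<in>Q. u q *\<^sub>R fst q) (\<Sum>q\<in>Q. u q *\<^sub>R fst (snd q))
      \<le> (\<Sum>q\<in>Q. u q * inner (fst q) (fst (snd q)))"
    using assms(2) \<open>finite Q\<close> u0 u1
    by (intro convex_combination_inner_le) (auto simp: Q_def intro: monotone_setD)
  ultimately show ?thesis by simp
qed

lemma monotone_set_finite_antidiagonal_point:
  fixes F :: "('a::real_inner \<times> 'a) set"
  assumes "finite F" "monotone_set F"
  shows "\<exists>x. \<forall>(y, v)\<in>F. inner (x - y) (x + v) \<le> 0"
proof (cases "F = {}")
  case False
  define H where "H = convex hull ((\<lambda>(y, v). (y, v, inner y v)) ` F)"
  define L where "L = (\<lambda>q::'a \<times> 'a \<times> real. (1/2) *\<^sub>R (fst q - fst (snd q)))"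
  define \<sigma> where "\<sigma> = (\<lambda>q::'a \<times> 'a \<times> real. snd (snd q))"
  have lin: "linear L" "linear \<sigma>"
    unfolding L_def \<sigma>_def by (auto intro!: linearI simp: algebra_simps)
  have "compact H" "H \<noteq> {}"
    using assms(1) False by (auto simp: H_def intro!: finite_imp_compact_convex_hull)
  moreover have "continuous_on H (\<lambda>q. (norm (L q))\<^sup>2 + \<sigma> q)"
    unfolding L_def \<sigma>_def by (intro continuous_intros)
  ultimately obtain q where "q \<in> H"
    and qmin: "\<And>z. z \<in> H \<Longrightarrow> (norm (L q))\<^sup>2 + \<sigma> q \<le> (norm (L z))\<^sup>2 + \<sigma> z"
    using continuous_attains_inf[of H "\<lambda>q. (norm (L q))\<^sup>2 + \<sigma> q"] by auto
  obtain a b s where q: "q = (a, b, s)" by (cases q)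
  define w where "w = (1/2) *\<^sub>R (a - b)"
  have "inner a b \<le> s"
    using \<open>q \<in> H\<close> unfolding H_def q by (rule convex_hull_inner_lift_above[OF assms])
  moreover have "(norm w)\<^sup>2 + inner a b = (norm ((1/2) *\<^sub>R (a + b)))\<^sup>2"
    unfolding w_def power2_norm_eq_inner
    by (simp add: inner_add_left inner_add_right inner_diff_left inner_diff_right inner_commute algebra_simps)
  ultimately have w_s: "0 \<le> (norm w)\<^sup>2 + s"
    using zero_le_power2[of "norm ((1/2) *\<^sub>R (a + b))"] by linarith
  have "convex H" by (simp add: H_def)
  show ?thesis
  proof (intro exI ballI, clarify)
    fix y v assume "(y, v) \<in> F"
    define h where "h = (1/2) *\<^sub>R (y - v)"
    have "(y, v, inner y v) \<in> H" unfolding H_def using \<open>(y, v) \<in> F\<close> by (intro hull_inc) force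
    from linear_quadratic_min_first_order[OF lin \<open>convex H\<close> \<open>q \<in> H\<close> this qmin]
    have "0 \<le> 2 * inner w (h - w) + inner y v - s"
      by (simp add: w_def h_def L_def \<sigma>_def q)
    moreover have "inner w (h - w) = inner w h - (norm w)\<^sup>2"
      by (simp add: inner_diff_right power2_norm_eq_inner)
    moreover have "inner (w - y) (w + v) = (norm w)\<^sup>2 - 2 * inner w h - inner y v"
      unfolding h_def power2_norm_eq_inner
      by (simp add: inner_add_left inner_add_right inner_diff_left inner_diff_right inner_commute algebra_simps)
    ultimately show "inner (w - y) (w + v) \<le> 0"
      using w_s by linarith
  qed
qed simp

section \<open>Directed families of closed convex sets in Hilbert space\<close>

lemma infdist_sq_le: "a \<in> A \<Longrightarrow> (infdist x A)\<^sup>2 \<le> (dist x a)\<^sup>2"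
  by (intro power_mono infdist_le infdist_nonneg)

lemma infdist_sq_approx:
  assumes "A \<noteq> {}" "0 < c"
  shows "\<exists>a\<in>A. (dist x a)\<^sup>2 < (infdist x A)\<^sup>2 + c"
proof -
  have "infdist x A < sqrt ((infdist x A)\<^sup>2 + c)"
    using assms(2) infdist_nonneg[of x A] by (intro real_less_rsqrt) simp
  then obtain a where "a \<in> A" "dist x a < sqrt ((infdist x A)\<^sup>2 + c)"
    using assms(1) by (auto simp: infdist_notempty cInf_less_iff intro: bdd_belowI2[where m=0])
  moreover from this have "(dist x a)\<^sup>2 < (sqrt ((infdist x A)\<^sup>2 + c))\<^sup>2"
    by (intro power_strict_mono) auto
  ultimately show ?thesis using assms(2) by auto
qed

lemma sq_norm_diff_le_of_near_min_norm:
  fixes a b :: "'a::real_inner"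
  assumes "convex E" "a \<in> E" "b \<in> E" "\<And>z. z \<in> E \<Longrightarrow> \<rho> \<le> (norm z)\<^sup>2"
    and "(norm a)\<^sup>2 \<le> \<rho> + \<delta>" "(norm b)\<^sup>2 \<le> \<rho> + \<delta>"
  shows "(norm (a - b))\<^sup>2 \<le> 4 * \<delta>"
proof -
  have "\<rho> \<le> (norm ((1/2) *\<^sub>R a + (1/2) *\<^sub>R b))\<^sup>2"
    using assms(1-4) by (intro assms(4) convexD) auto
  moreover have "(norm (a - b))\<^sup>2 + 4 * (norm ((1/2) *\<^sub>R a + (1/2) *\<^sub>R b))\<^sup>2
      = 2 * (norm a)\<^sup>2 + 2 * (norm b)\<^sup>2"
    unfolding power2_norm_eq_inner
    by (simp add: inner_add_left inner_add_right inner_diff_left inner_diff_right inner_commute algebra_simps)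
  ultimately show ?thesis using assms(5,6) by linarith
qed

lemma sqrt_const_over_Suc_tendsto_zero: "(\<lambda>n. sqrt (c / (real n + 1))) \<longlonglongrightarrow> 0"
proof -
  have "(\<lambda>n. sqrt (c * inverse (real (Suc n)))) \<longlonglongrightarrow> sqrt (c * 0)"
    by (intro tendsto_intros LIMSEQ_inverse_real_of_nat)
  then show ?thesis by (simp add: divide_inverse add.commute)
qed

lemma LIMSEQ_zero_if_sq_norm_le:
  fixes a :: "nat \<Rightarrow> 'a::real_normed_vector"
  assumes "\<And>n. (norm (a n))\<^sup>2 \<le> c / (real n + 1)"
  shows "a \<longlonglongrightarrow> 0"
proof (rule tendsto_norm_zero_cancel, rule tendsto_sandwich)
  show "\<forall>\<^sub>F n in sequentially. norm (a n) \<le> sqrt (c / (real n + 1))"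
    using assms by (simp add: real_le_rsqrt)
qed (use sqrt_const_over_Suc_tendsto_zero in auto)

lemma Cauchy_if_sq_norm_diff_le:
  fixes x :: "nat \<Rightarrow> 'a::real_normed_vector"
  assumes "\<And>m n. n \<le> m \<Longrightarrow> (norm (x m - x n))\<^sup>2 \<le> c / (real n + 1)"
  shows "Cauchy x"
  unfolding Cauchy_altdef2
proof (intro allI impI)
  fix e :: real assume "0 < e"
  then have "\<forall>\<^sub>F N in sequentially. sqrt (c / (real N + 1)) < e"
    using order_tendstoD(2)[OF sqrt_const_over_Suc_tendsto_zero] by blast
  then obtain N where N: "sqrt (c / (real N + 1)) < e"
    by (auto simp: eventually_sequentially)
  have "dist (x n) (x N) < e" if "N \<le> n" for n
  proof -
    have "norm (x n - x N) \<le> sqrt (c / (real N + 1))"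
      using assms[OF that] by (simp add: real_le_rsqrt)
    then show ?thesis using N by (simp add: dist_norm)
  qed
  then show "\<exists>N. \<forall>n\<ge>N. dist (x n) (x N) < e" by blast
qed

lemma decseq_refinement_in_directed_family:
  assumes dir: "\<And>C C'. C \<in> \<C> \<Longrightarrow> C' \<in> \<C> \<Longrightarrow> \<exists>C''\<in>\<C>. C'' \<subseteq> C \<inter> C'"
    and "\<And>n. C n \<in> \<C>"
  shows "\<exists>D. (\<forall>n. D n \<in> \<C> \<and> D n \<subseteq> C n) \<and> decseq D"
proof -
  obtain h where h: "\<And>C C'. C \<in> \<C> \<Longrightarrow> C' \<in> \<C> \<Longrightarrow> h C C' \<in> \<C> \<and> h C C' \<subseteq> C \<inter> C'"
    using dir by metis
  define D where "D = rec_nat (C 0) (\<lambda>n E. h E (C (Suc n)))"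
  have D: "D n \<in> \<C> \<and> D n \<subseteq> C n" for n
    by (induction n) (use h assms(2) in \<open>auto simp: D_def\<close>)
  moreover have "decseq D"
    unfolding decseq_Suc_iff using h D assms(2) by (auto simp: D_def)
  ultimately show ?thesis by blast
qed

lemma directed_family_min_norm_chain:
  fixes \<C> :: "'a::real_normed_vector set set"
  assumes "\<C> \<noteq> {}" and ne: "\<And>C. C \<in> \<C> \<Longrightarrow> C \<noteq> {}" and "bounded (\<Union>\<C>)"
    and dir: "\<And>C C'. C \<in> \<C> \<Longrightarrow> C' \<in> \<C> \<Longrightarrow> \<exists>C''\<in>\<C>. C'' \<subseteq> C \<inter> C'"
  obtains r D where "\<And>n. D n \<in> \<C>" "decseq D"
    and "\<And>n z. z \<in> D n \<Longrightarrow> r - 1 / (real n + 1) \<le> (norm z)\<^sup>2"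
    and "\<And>E n. E \<in> \<C> \<Longrightarrow> \<exists>z\<in>E. (norm z)\<^sup>2 \<le> r + 1 / (real n + 1)"
proof -
  define \<rho> where "\<rho> C = (infdist 0 C)\<^sup>2" for C :: "'a set"
  have \<rho>_le: "\<rho> C \<le> (norm z)\<^sup>2" if "z \<in> C" for C z
    using infdist_sq_le[OF that, of 0] by (simp add: \<rho>_def)
  obtain B where B: "\<And>z. z \<in> \<Union>\<C> \<Longrightarrow> norm z \<le> B"
    using \<open>bounded (\<Union>\<C>)\<close> by (auto simp: bounded_iff)
  have "\<rho> C \<le> B\<^sup>2" if "C \<in> \<C>" for C
  proof -
    obtain z where "z \<in> C" using ne \<open>C \<in> \<C>\<close> by blast
    then have "\<rho> C \<le> (norm z)\<^sup>2" "norm z \<le> B" using \<rho>_le B \<open>C \<in> \<C>\<close> by auto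
    then show ?thesis by (meson norm_ge_zero order_trans power_mono)
  qed
  then have bdd: "bdd_above (\<rho> ` \<C>)" by (auto intro!: bdd_aboveI2)
  define r where "r = Sup (\<rho> ` \<C>)"
  have "\<forall>n. \<exists>C. C \<in> \<C> \<and> r - 1 / (real n + 1) < \<rho> C"
  proof
    fix n
    have "r - 1 / (real n + 1) < Sup (\<rho> ` \<C>)" by (simp add: r_def)
    then show "\<exists>C. C \<in> \<C> \<and> r - 1 / (real n + 1) < \<rho> C"
      using \<open>\<C> \<noteq> {}\<close> bdd by (subst (asm) less_cSup_iff) auto
  qed
  then obtain C where C: "\<And>n. C n \<in> \<C>" "\<And>n. r - 1 / (real n + 1) < \<rho> (C n)"
    by (auto simp: choice_iff)
  obtain D where D: "\<And>n. D n \<in> \<C>" "\<And>n. D n \<subseteq> C n" and "decseq D"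
    using decseq_refinement_in_directed_family[of \<C> C] dir C(1) by blast
  show thesis
  proof (rule that[OF D(1) \<open>decseq D\<close>])
    show "r - 1 / (real n + 1) \<le> (norm z)\<^sup>2" if "z \<in> D n" for n z
    proof -
      have "infdist 0 (C n) \<le> infdist 0 (D n)" using infdist_mono[OF D(2)] that by blast
      then have "\<rho> (C n) \<le> \<rho> (D n)" by (simp add: \<rho>_def power_mono infdist_nonneg)
      then show ?thesis using C(2)[of n] \<rho>_le[OF that] by linarith
    qed
    show "\<exists>z\<in>E. (norm z)\<^sup>2 \<le> r + 1 / (real n + 1)" if "E \<in> \<C>" for E n
    proof -
      obtain z where "z \<in> E" "(norm z)\<^sup>2 < \<rho> E + 1 / (real n + 1)"
        using infdist_sq_approx[OF ne[OF \<open>E \<in> \<C>\<close>], of "1 / (real n + 1)" 0] by (auto simp: \<rho>_def)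
      moreover have "\<rho> E \<le> r"
        unfolding r_def using bdd \<open>E \<in> \<C>\<close> by (rule cSUP_upper2) auto
      ultimately show ?thesis by force
    qed
  qed
qed

lemma near_min_norm_selections_converge:
  fixes D :: "nat \<Rightarrow> 'a::{real_inner,complete_space} set"
  assumes "\<And>n. convex (D n)" "decseq D"
    and shell: "\<And>n z. z \<in> D n \<Longrightarrow> r - 1 / (real n + 1) \<le> (norm z)\<^sup>2"
    and "\<And>n. \<exists>z\<in>D n. (norm z)\<^sup>2 \<le> r + 1 / (real n + 1)"
  shows "\<exists>l. \<forall>z. (\<forall>n. z n \<in> D n \<and> (norm (z n))\<^sup>2 \<le> r + 1 / (real n + 1)) \<longrightarrow> z \<longlonglongrightarrow> l"
proof -
  have close: "(norm (a - b))\<^sup>2 \<le> 8 / (real n + 1)"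
    if "a \<in> D n" "b \<in> D n" "(norm a)\<^sup>2 \<le> r + 1 / (real n + 1)" "(norm b)\<^sup>2 \<le> r + 1 / (real n + 1)"
    for a b n
  proof -
    have "(norm (a - b))\<^sup>2 \<le> 4 * (2 * (1 / (real n + 1)))"
      by (rule sq_norm_diff_le_of_near_min_norm[OF assms(1) that(1,2) shell])
        (use that(3,4) in auto)
    then show ?thesis by simp
  qed
  obtain x where x: "\<And>n. x n \<in> D n" "\<And>n. (norm (x n))\<^sup>2 \<le> r + 1 / (real n + 1)"
    using assms(4) by metis
  have "Cauchy x"
  proof (rule Cauchy_if_sq_norm_diff_le)
    fix m n :: nat assume "n \<le> m"
    have "1 / (real m + 1) \<le> 1 / (real n + 1)" using \<open>n \<le> m\<close> by (simp add: frac_le)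
    then have "(norm (x m))\<^sup>2 \<le> r + 1 / (real n + 1)" using x(2)[of m] by linarith
    moreover have "x m \<in> D n" using \<open>decseq D\<close> \<open>n \<le> m\<close> x(1)[of m] by (auto simp: decseq_def)
    ultimately show "(norm (x m - x n))\<^sup>2 \<le> 8 / (real n + 1)"
      using close x by blast
  qed
  then obtain l where "x \<longlonglongrightarrow> l" using Cauchy_convergent convergent_def by blast
  have "z \<longlonglongrightarrow> l" if z: "\<forall>n. z n \<in> D n \<and> (norm (z n))\<^sup>2 \<le> r + 1 / (real n + 1)" for z
  proof -
    have "(\<lambda>n. z n - x n) \<longlonglongrightarrow> 0"
      using z x close by (intro LIMSEQ_zero_if_sq_norm_le[of _ 8]) blast
    then have "(\<lambda>n. (z n - x n) + x n) \<longlonglongrightarrow> 0 + l"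
      using \<open>x \<longlonglongrightarrow> l\<close> by (rule tendsto_add)
    then show ?thesis by simp
  qed
  then show ?thesis by blast
qed

lemma directed_closed_convex_Inter_nonempty:
  fixes \<C> :: "'a::{real_inner,complete_space} set set"
  assumes "\<C> \<noteq> {}"
    and sets: "\<And>C. C \<in> \<C> \<Longrightarrow> closed C \<and> convex C \<and> C \<noteq> {}"
    and "bounded (\<Union>\<C>)"
    and dir: "\<And>C C'. C \<in> \<C> \<Longrightarrow> C' \<in> \<C> \<Longrightarrow> \<exists>C''\<in>\<C>. C'' \<subseteq> C \<inter> C'"
  shows "\<Inter>\<C> \<noteq> {}"
proof -
  obtain r D where D: "\<And>n. D n \<in> \<C>" "decseq D"
    and shell: "\<And>n z. z \<in> D n \<Longrightarrow> r - 1 / (real n + 1) \<le> (norm z)\<^sup>2"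
    and near_min: "\<And>E n. E \<in> \<C> \<Longrightarrow> \<exists>z\<in>E. (norm z)\<^sup>2 \<le> r + 1 / (real n + 1)"
    using directed_family_min_norm_chain[OF assms(1) _ assms(3) dir] sets by metis
  obtain l where l: "\<And>z. \<forall>n. z n \<in> D n \<and> (norm (z n))\<^sup>2 \<le> r + 1 / (real n + 1) \<Longrightarrow> z \<longlonglongrightarrow> l"
    using near_min_norm_selections_converge[OF _ D(2) shell] sets D(1) near_min by metis
  have "l \<in> E" if "E \<in> \<C>" for E
  proof -
    have "\<forall>n. \<exists>z. z \<in> E \<and> z \<in> D n \<and> (norm z)\<^sup>2 \<le> r + 1 / (real n + 1)"
    proof
      fix n
      obtain E' where "E' \<in> \<C>" "E' \<subseteq> E \<inter> D n" using dir[OF \<open>E \<in> \<C>\<close> D(1)] by blast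
      then show "\<exists>z. z \<in> E \<and> z \<in> D n \<and> (norm z)\<^sup>2 \<le> r + 1 / (real n + 1)"
        using near_min[of E' n] by blast
    qed
    then obtain z where "\<And>n. z n \<in> E" "\<forall>n. z n \<in> D n \<and> (norm (z n))\<^sup>2 \<le> r + 1 / (real n + 1)"
      by (auto simp: choice_iff)
    then show ?thesis
      using closed_sequentially[of E z l] sets[OF that] l by blast
  qed
  then show ?thesis by blast
qed

section \<open>Minty's theorem and the resolvent\<close>

lemma inner_diff_add_nonpos_eq_cball:
  fixes y v :: "'a::real_inner"
  shows "{x. inner (x - y) (x + v) \<le> 0} = cball ((1/2) *\<^sub>R (y - v)) (norm (y + v) / 2)"
proof -
  have "inner (x - y) (x + v) = (dist ((1/2) *\<^sub>R (y - v)) x)\<^sup>2 - (norm (y + v) / 2)\<^sup>2" for x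
    unfolding dist_norm power2_norm_eq_inner power_divide
    by (simp add: inner_add_left inner_add_right inner_diff_left inner_diff_right inner_commute algebra_simps)
  moreover have "(dist c x)\<^sup>2 \<le> (norm (y + v) / 2)\<^sup>2 \<longleftrightarrow> dist c x \<le> norm (y + v) / 2" for c x :: 'a
    by (rule power_mono_iff) auto
  ultimately show ?thesis unfolding cball_def by force
qed

lemma monotone_set_antidiagonal_point:
  fixes G :: "('a::{real_inner,complete_space} \<times> 'a) set"
  assumes "monotone_set G"
  shows "\<exists>x. \<forall>(y, v)\<in>G. inner (x - y) (x + v) \<le> 0"
proof (cases "G = {}")
  case False
  then obtain g\<^sub>0 where "g\<^sub>0 \<in> G" by blast
  define K where "K g = {x. inner (x - fst g) (x + snd g) \<le> 0}" for g :: "'a \<times> 'a"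
  define \<C> where "\<C> = {\<Inter>(K ` F) | F. finite F \<and> F \<subseteq> G \<and> g\<^sub>0 \<in> F}"
  have \<C>I: "\<Inter>(K ` F) \<in> \<C>" if "finite F" "F \<subseteq> G" "g\<^sub>0 \<in> F" for F
    unfolding \<C>_def using that by (intro CollectI exI[of _ F] conjI refl)
  have \<C>E: "\<exists>F. C = \<Inter>(K ` F) \<and> finite F \<and> F \<subseteq> G \<and> g\<^sub>0 \<in> F" if "C \<in> \<C>" for C
    using that unfolding \<C>_def mem_Collect_eq .
  have K: "K g = cball ((1/2) *\<^sub>R (fst g - snd g)) (norm (fst g + snd g) / 2)" for g
    unfolding K_def by (rule inner_diff_add_nonpos_eq_cball)
  have "\<Inter>\<C> \<noteq> {}"
  proof (rule directed_closed_convex_Inter_nonempty)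
    show "\<C> \<noteq> {}" using \<C>I[of "{g\<^sub>0}"] \<open>g\<^sub>0 \<in> G\<close> by auto
    show "closed C \<and> convex C \<and> C \<noteq> {}" if C: "C \<in> \<C>" for C
    proof -
      obtain F where F: "C = \<Inter>(K ` F)" "finite F" "F \<subseteq> G" using \<C>E[OF C] by blast
      obtain x where "\<forall>(y, v)\<in>F. inner (x - y) (x + v) \<le> 0"
        using monotone_set_finite_antidiagonal_point F(2) monotone_set_subset[OF assms F(3)] by blast
      then have "x \<in> C" unfolding F(1) K_def by fastforce
      moreover have "closed C" "convex C"
        unfolding F(1) K by (auto intro!: closed_Inter convex_Inter)
      ultimately show ?thesis by blast
    qed
    have "\<Union>\<C> \<subseteq> K g\<^sub>0"
    proof
      fix z assume "z \<in> \<Union>\<C>"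
      then obtain C where "C \<in> \<C>" "z \<in> C" by blast
      moreover obtain F where "C = \<Inter>(K ` F)" "g\<^sub>0 \<in> F" using \<C>E[OF \<open>C \<in> \<C>\<close>] by blast
      ultimately show "z \<in> K g\<^sub>0" by blast
    qed
    then show "bounded (\<Union>\<C>)" by (rule bounded_subset[rotated]) (simp add: K)
    show "\<exists>C''\<in>\<C>. C'' \<subseteq> C \<inter> C'" if C: "C \<in> \<C>" "C' \<in> \<C>" for C C'
    proof -
      obtain F F' where "C = \<Inter>(K ` F)" "C' = \<Inter>(K ` F')" "finite F" "finite F'"
        "F \<subseteq> G" "F' \<subseteq> G" "g\<^sub>0 \<in> F"
        using \<C>E[OF C(1)] \<C>E[OF C(2)] by blast
      then have "\<Inter>(K ` (F \<union> F')) \<in> \<C>" "\<Inter>(K ` (F \<union> F')) \<subseteq> C \<inter> C'"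
        using \<C>I[of "F \<union> F'"] by auto
      then show ?thesis by blast
    qed
  qed
  then obtain x where x: "\<And>C. C \<in> \<C> \<Longrightarrow> x \<in> C" by blast
  have "x \<in> K g" if "g \<in> G" for g
    using x[OF \<C>I[of "{g\<^sub>0, g}"]] that \<open>g\<^sub>0 \<in> G\<close> by auto
  then show ?thesis unfolding K_def by fastforce
qed simp

lemma maximal_monotone_memI:
  assumes "maximal_monotone A"
    and rel: "\<And>y v. v \<in> A y \<Longrightarrow> 0 \<le> inner (x - y) (u - v)"
  shows "u \<in> A x"
proof -
  define B where "B = A(x := insert u (A x))"
  have "monotone_op B"
    unfolding monotone_op_def
  proof (intro allI impI)
    fix a b u' v' assume u': "u' \<in> B a" and v': "v' \<in> B b"
    have rel': "0 \<le> inner (y - x) (v - u)" if "v \<in> A y" for y v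
      using rel[OF that] by (simp add: inner_diff_left inner_diff_right algebra_simps)
    consider "u' \<in> A a" "v' \<in> A b" | "a = x" "u' = u" | "b = x" "v' = u"
      using u' v' unfolding B_def by (auto split: if_splits)
    then show "0 \<le> inner (a - b) (u' - v')"
    proof cases
      case 1
      then show ?thesis using assms(1) by (simp add: maximal_monotone_def monotone_op_def)
    next
      case 2
      then show ?thesis using rel v' by (cases "b = x \<and> v' = u") (auto simp: B_def split: if_splits)
    next
      case 3
      then show ?thesis using rel' u' by (cases "a = x \<and> u' = u") (auto simp: B_def split: if_splits)
    qed
  qed
  moreover have "\<forall>w. A w \<subseteq> B w" by (simp add: B_def subset_insertI)
  ultimately have "B = A" using assms(1) by (simp add: maximal_monotone_def)
  then show ?thesis by (metis fun_upd_same insertI1 B_def)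
qed

theorem maximal_monotone_Id_plus_surj:
  fixes A :: "'a::{real_inner,complete_space} \<Rightarrow> 'a set"
  assumes "maximal_monotone A"
  shows "\<exists>x. z - x \<in> A x"
proof -
  define G where "G = (\<lambda>(y, v). (y, v - z)) ` {(y, v). v \<in> A y}"
  have mon: "monotone_op A" using assms by (simp add: maximal_monotone_def)
  have "monotone_set G"
    unfolding monotone_set_def G_def
  proof (clarify)
    fix y v y' v' assume "v \<in> A y" "v' \<in> A y'"
    then have "0 \<le> inner (y - y') (v - v')" using mon by (simp add: monotone_op_def)
    then show "0 \<le> inner (y - y') (v - z - (v' - z))" by simp
  qed
  then obtain x where x: "\<forall>(y, v)\<in>G. inner (x - y) (x + v) \<le> 0"
    using monotone_set_antidiagonal_point by blast
  have "z - x \<in> A x"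
  proof (rule maximal_monotone_memI[OF assms])
    fix y v assume "v \<in> A y"
    then have "(y, v - z) \<in> G" by (auto simp: G_def)
    then have "inner (x - y) (x + (v - z)) \<le> 0" using x by blast
    moreover have "inner (x - y) ((z - x) - v) = - inner (x - y) (x + (v - z))"
      by (simp add: inner_diff_right inner_add_right algebra_simps)
    ultimately show "0 \<le> inner (x - y) ((z - x) - v)" by simp
  qed
  then show ?thesis ..
qed

lemma resolvent_eq_unique:
  assumes "monotone_op A" "z - a \<in> A a" "z - b \<in> A b"
  shows "a = b"
proof -
  have "0 \<le> inner (a - b) ((z - a) - (z - b))"
    using assms unfolding monotone_op_def by blast
  also have "\<dots> = - inner (a - b) (a - b)" by (simp add: inner_diff_right algebra_simps)
  finally have "inner (a - b) (a - b) \<le> 0" by simp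
  then show ?thesis using inner_ge_zero[of "a - b"] by simp
qed

lemma resolvent_mem:
  fixes A :: "'a::{real_inner,complete_space} \<Rightarrow> 'a set"
  assumes "maximal_monotone A"
  shows "z - resolvent A z \<in> A (resolvent A z)"
proof -
  have "monotone_op A" using assms by (simp add: maximal_monotone_def)
  then have "\<exists>!y. z - y \<in> A y"
    using maximal_monotone_Id_plus_surj[OF assms, of z] resolvent_eq_unique by blast
  then show ?thesis unfolding resolvent_def by (rule theI')
qed

lemma resolvent_zero:
  assumes "monotone_op A" "p \<in> zeros A"
  shows "resolvent A p = p"
  unfolding resolvent_def
proof (rule the_equality)
  show "p - p \<in> A p" using assms(2) by (simp add: zeros_def)
  then show "y = p" if "p - y \<in> A y" for y
    using resolvent_eq_unique[OF assms(1) that] by blast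
qed

lemma resolvent_lipschitz:
  fixes A :: "'a::{real_inner,complete_space} \<Rightarrow> 'a set"
  assumes "maximal_monotone A"
  shows "1-lipschitz_on UNIV (resolvent A)"
proof (rule lipschitz_onI)
  fix x y :: 'a
  define a b where "a = resolvent A x" and "b = resolvent A y"
  have "0 \<le> inner (a - b) ((x - a) - (y - b))"
    using resolvent_mem[OF assms, of x] resolvent_mem[OF assms, of y] assms
    unfolding a_def b_def maximal_monotone_def monotone_op_def by blast
  then have "(norm (a - b))\<^sup>2 \<le> inner (a - b) (x - y)"
    by (simp add: power2_norm_eq_inner inner_diff_right algebra_simps)
  also have "\<dots> \<le> norm (a - b) * norm (x - y)" by (rule norm_cauchy_schwarz)
  finally have "norm (a - b) * norm (a - b) \<le> norm (a - b) * norm (x - y)"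
    by (simp add: power2_eq_square)
  then have "norm (a - b) \<le> norm (x - y)"
    by (cases "norm (a - b) = 0") (simp_all add: mult_le_cancel_left)
  then show "dist (resolvent A x) (resolvent A y) \<le> 1 * dist x y"
    by (simp add: a_def b_def dist_norm)
qed simp

section \<open>Approximate fixed points of nonexpansive maps\<close>

definition approx_fixpoints :: "('a::real_normed_vector \<Rightarrow> 'a) \<Rightarrow> 'a \<Rightarrow> nat \<Rightarrow> nat \<Rightarrow> 'a set" where
  "approx_fixpoints J p N m = {y \<in> cball p (real N). norm (J y - y) \<le> 1 / (real m + 1)}"

lemma approx_fixpoints_antimono:
  "m \<le> m' \<Longrightarrow> approx_fixpoints J p N m' \<subseteq> approx_fixpoints J p N m"
  unfolding approx_fixpoints_def by (auto elim!: order_trans intro!: frac_le)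

lemma fixpoint_in_approx_fixpoints: "J p = p \<Longrightarrow> p \<in> approx_fixpoints J p N m"
  by (simp add: approx_fixpoints_def)

lemma norm_convex_comb_sq:
  fixes a b :: "'a::real_inner"
  shows "(norm ((1 - t) *\<^sub>R a + t *\<^sub>R b))\<^sup>2
    = (1 - t) * (norm a)\<^sup>2 + t * (norm b)\<^sup>2 - t * (1 - t) * (norm (b - a))\<^sup>2"
  unfolding power2_norm_eq_inner
  by (simp add: inner_add_left inner_add_right inner_diff_left inner_diff_right inner_commute algebra_simps)

lemma lipschitz_defect_convex_comb:
  fixes J :: "'a::real_inner \<Rightarrow> 'a"
  assumes J: "1-lipschitz_on UNIV J"
    and "norm (J x - x) \<le> e" "norm (J y - y) \<le> e" "0 \<le> t" "t \<le> 1"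
  defines "z \<equiv> (1 - t) *\<^sub>R x + t *\<^sub>R y"
  shows "(norm (J z - z))\<^sup>2 \<le> norm (x - y) * e + e\<^sup>2"
proof -
  define D where "D = norm (x - y)"
  have "0 \<le> e" using assms(2) norm_ge_zero order_trans by blast
  have "norm (J z - x) \<le> t * D + e"
  proof -
    have "norm (J z - J x) \<le> norm (z - x)" using lipschitz_on_normD[OF J] by simp
    also have "z - x = t *\<^sub>R (y - x)" by (simp add: z_def algebra_simps)
    finally show ?thesis
      using norm_triangle_ineq[of "J z - J x" "J x - x"] assms(2,4)
      by (simp add: D_def norm_minus_commute)
  qed
  moreover have "norm (J z - y) \<le> (1 - t) * D + e"
  proof -
    have "norm (J z - J y) \<le> norm (z - y)" using lipschitz_on_normD[OF J] by simp
    also have "z - y = (1 - t) *\<^sub>R (x - y)" by (simp add: z_def algebra_simps)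
    finally show ?thesis
      using norm_triangle_ineq[of "J z - J y" "J y - y"] assms(3,5) by (simp add: D_def)
  qed
  ultimately have "(1 - t) * (norm (J z - x))\<^sup>2 + t * (norm (J z - y))\<^sup>2
      \<le> (1 - t) * (t * D + e)\<^sup>2 + t * ((1 - t) * D + e)\<^sup>2"
    using assms(4,5) by (intro add_mono mult_left_mono power_mono) auto
  moreover have "J z - z = (1 - t) *\<^sub>R (J z - x) + t *\<^sub>R (J z - y)"
    by (simp add: z_def algebra_simps)
  then have "(norm (J z - z))\<^sup>2
      = (1 - t) * (norm (J z - x))\<^sup>2 + t * (norm (J z - y))\<^sup>2 - t * (1 - t) * D\<^sup>2"
    by (simp add: norm_convex_comb_sq D_def)
  moreover have "(1 - t) * (t * D + e)\<^sup>2 + t * ((1 - t) * D + e)\<^sup>2 - t * (1 - t) * D\<^sup>2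
      = (1 - (2 * t - 1)\<^sup>2) * (D * e) + e\<^sup>2"
    by (simp add: power2_eq_square algebra_simps)
  moreover have "(1 - (2 * t - 1)\<^sup>2) * (D * e) \<le> 1 * (D * e)"
    using \<open>0 \<le> e\<close> by (intro mult_right_mono) (auto simp: D_def)
  ultimately show ?thesis by (simp add: D_def)
qed

lemma linear_plus_sq_le_inverse_sq:
  fixes r D e :: real
  assumes "1 \<le> r" "0 \<le> D" "D \<le> 2 * r" "e = 1 / (24 * r * (real m + 1)\<^sup>2 + 1)"
  shows "D * e + e\<^sup>2 \<le> (1 / (real m + 1))\<^sup>2"
proof -
  have "1 \<le> 24 * r * (real m + 1)\<^sup>2 + 1" using assms(1) by simp
  then have "0 \<le> e" "e \<le> 1" by (simp_all add: assms(4))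
  then have "e\<^sup>2 \<le> e" by (simp add: power2_eq_square mult_left_le_one_le)
  moreover have "D * e \<le> 2 * r * e" using assms(3) \<open>0 \<le> e\<close> by (rule mult_right_mono)
  moreover have "e \<le> r * e" using assms(1) \<open>0 \<le> e\<close> by (simp add: mult_le_cancel_right1)
  ultimately have "D * e + e\<^sup>2 \<le> 3 * r * e" by linarith
  also have "\<dots> \<le> 3 * r * (1 / (24 * r * (real m + 1)\<^sup>2))"
  proof -
    have "e \<le> 1 / (24 * r * (real m + 1)\<^sup>2)"
      unfolding assms(4) by (rule frac_le) (use assms(1) in auto)
    then show ?thesis using assms(1) by (intro mult_left_mono) auto
  qed
  also have "\<dots> = 1 / (8 * (real m + 1)\<^sup>2)" using assms(1) by (simp add: field_simps)
  also have "\<dots> \<le> (1 / (real m + 1))\<^sup>2" by (simp add: power_divide frac_le)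
  finally show ?thesis .
qed

lemma approx_fixpoints_convex_comb:
  fixes J :: "'a::real_inner \<Rightarrow> 'a"
  assumes J: "1-lipschitz_on UNIV J" and "N \<noteq> 0"
    and x: "x \<in> approx_fixpoints J p N (24 * N * (m + 1)\<^sup>2)"
    and y: "y \<in> approx_fixpoints J p N (24 * N * (m + 1)\<^sup>2)"
    and "0 \<le> t" "t \<le> 1"
  shows "(1 - t) *\<^sub>R x + t *\<^sub>R y \<in> approx_fixpoints J p N m"
proof -
  define z where "z = (1 - t) *\<^sub>R x + t *\<^sub>R y"
  define e where "e = 1 / (real (24 * N * (m + 1)\<^sup>2) + 1)"
  have xy: "x \<in> cball p (real N)" "y \<in> cball p (real N)" "norm (J x - x) \<le> e" "norm (J y - y) \<le> e"
    using x y unfolding approx_fixpoints_def e_def by blast+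
  have e: "e = 1 / (24 * real N * (real m + 1)\<^sup>2 + 1)" by (simp add: e_def)
  have "norm (x - y) \<le> dist x p + dist p y" by (metis dist_norm dist_triangle)
  then have "norm (x - y) \<le> 2 * real N" using xy(1,2) by (simp add: dist_commute)
  then have "norm (x - y) * e + e\<^sup>2 \<le> (1 / (real m + 1))\<^sup>2"
    using \<open>N \<noteq> 0\<close> by (intro linear_plus_sq_le_inverse_sq[OF _ _ _ e]) auto
  with lipschitz_defect_convex_comb[OF J xy(3,4) assms(5,6)]
  have "(norm (J z - z))\<^sup>2 \<le> (1 / (real m + 1))\<^sup>2"
    unfolding z_def by linarith
  then have "norm (J z - z) \<le> 1 / (real m + 1)" by (rule power2_le_imp_le) simp
  moreover have "z \<in> cball p (real N)"
    unfolding z_def using xy(1,2) assms(5,6) by (intro convexD) auto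
  ultimately show ?thesis by (simp add: approx_fixpoints_def z_def)
qed

lemma ex_small_increment:
  fixes a :: "nat \<Rightarrow> real"
  assumes "0 < R" "a R - a 0 \<le> real R * c"
  shows "\<exists>i<R. a (Suc i) - a i \<le> c"
proof (rule ccontr)
  assume "\<not> ?thesis"
  then have "(\<Sum>i<R. c) < (\<Sum>i<R. a (Suc i) - a i)"
    using assms(1) by (intro sum_strict_mono) auto
  then show False using assms(2) by (simp add: sum_lessThan_telescope)
qed

lemma inner_le_of_near_min_on_segment:
  fixes x\<^sub>0 x y :: "'a::real_inner"
  assumes "0 < t" "(norm (x\<^sub>0 - x))\<^sup>2 \<le> (norm (x\<^sub>0 - ((1 - t) *\<^sub>R x + t *\<^sub>R y)))\<^sup>2 + \<epsilon>"
  shows "inner (x\<^sub>0 - x) (y - x) \<le> (\<epsilon> + t\<^sup>2 * (norm (y - x))\<^sup>2) / (2 * t)"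
proof -
  have eq: "x\<^sub>0 - ((1 - t) *\<^sub>R x + t *\<^sub>R y) = (x\<^sub>0 - x) + (- t) *\<^sub>R (y - x)"
    by (simp add: algebra_simps)
  have "(norm (x\<^sub>0 - ((1 - t) *\<^sub>R x + t *\<^sub>R y)))\<^sup>2
      = (norm (x\<^sub>0 - x))\<^sup>2 - 2 * t * inner (x\<^sub>0 - x) (y - x) + t\<^sup>2 * (norm (y - x))\<^sup>2"
    unfolding eq norm_add_scaleR_sq by simp
  then have "2 * t * inner (x\<^sub>0 - x) (y - x) \<le> \<epsilon> + t\<^sup>2 * (norm (y - x))\<^sup>2"
    using assms(2) by linarith
  then show ?thesis using assms(1) by (simp add: field_simps)
qed

lemma approx_fixpoint_near_projection:
  fixes J :: "'a::real_inner \<Rightarrow> 'a" and x\<^sub>0 p :: 'a and N :: nat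
  defines "d \<equiv> \<lambda>m. (infdist x\<^sub>0 (approx_fixpoints J p N m))\<^sup>2"
  assumes J: "1-lipschitz_on UNIV J" "J p = p" and "N \<noteq> 0"
    and n: "n = 24 * N * (m + 1)\<^sup>2" "n \<le> M"
    and gap: "d M \<le> d m + 1 / (16 * (real N)\<^sup>2 * (real k + 1)\<^sup>2)"
  shows "\<exists>x\<in>approx_fixpoints J p N M. \<forall>y\<in>approx_fixpoints J p N n.
    inner (x\<^sub>0 - x) (y - x) \<le> 1 / (real k + 1)"
proof -
  define r K where "r = real N" and "K = real k + 1"
  define c t where "c = 1 / (16 * r\<^sup>2 * K\<^sup>2)" and "t = 1 / (4 * r\<^sup>2 * K)"
  have "1 \<le> r" "1 \<le> K" using \<open>N \<noteq> 0\<close> by (simp_all add: r_def K_def)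
  moreover have "1 * 1 \<le> r\<^sup>2 * K"
    using mult_mono[OF one_le_power[OF \<open>1 \<le> r\<close>] \<open>1 \<le> K\<close>] by simp
  ultimately have "0 < c" "0 < t" "t \<le> 1" by (simp_all add: c_def t_def)
  obtain x where x: "x \<in> approx_fixpoints J p N M" "(dist x\<^sub>0 x)\<^sup>2 < d M + c"
    using infdist_sq_approx[OF _ \<open>0 < c\<close>] fixpoint_in_approx_fixpoints[of J p, OF J(2)] unfolding d_def by blast
  have "inner (x\<^sub>0 - x) (y - x) \<le> 1 / K" if y: "y \<in> approx_fixpoints J p N n" for y
  proof -
    have "x \<in> approx_fixpoints J p N n" using x(1) approx_fixpoints_antimono[OF n(2)] by blast
    then have "(1 - t) *\<^sub>R x + t *\<^sub>R y \<in> approx_fixpoints J p N m"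
      using approx_fixpoints_convex_comb[OF J(1) \<open>N \<noteq> 0\<close>] y \<open>0 < t\<close> \<open>t \<le> 1\<close> n(1) by simp
    then have "d m \<le> (norm (x\<^sub>0 - ((1 - t) *\<^sub>R x + t *\<^sub>R y)))\<^sup>2"
      unfolding d_def by (metis infdist_sq_le dist_norm)
    then have "(norm (x\<^sub>0 - x))\<^sup>2 \<le> (norm (x\<^sub>0 - ((1 - t) *\<^sub>R x + t *\<^sub>R y)))\<^sup>2 + 2 * c"
      using x(2) gap by (simp add: dist_norm c_def r_def K_def)
    then have "inner (x\<^sub>0 - x) (y - x) \<le> (2 * c + t\<^sup>2 * (norm (y - x))\<^sup>2) / (2 * t)"
      by (rule inner_le_of_near_min_on_segment[OF \<open>0 < t\<close>])
    also have "\<dots> \<le> (2 * c + t\<^sup>2 * (2 * r)\<^sup>2) / (2 * t)"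
    proof -
      have "norm (y - x) \<le> dist y p + dist p x" by (metis dist_norm dist_triangle)
      also have "\<dots> \<le> 2 * r"
        using x(1) y by (simp add: approx_fixpoints_def r_def dist_commute)
      finally show ?thesis
        using \<open>0 < t\<close> by (intro divide_right_mono add_left_mono mult_left_mono power_mono) auto
    qed
    also have "\<dots> = 3 / (4 * K)"
      using \<open>1 \<le> r\<close> \<open>1 \<le> K\<close> by (simp add: c_def t_def field_simps power2_eq_square)
    also have "\<dots> \<le> 1 / K" using \<open>1 \<le> K\<close> by (simp add: field_simps)
    finally show ?thesis .
  qed
  then show ?thesis using x(1) by (auto simp: K_def)
qed

lemma funpow_le_funpow_of_inflationary:
  fixes g :: "nat \<Rightarrow> nat"
  assumes "\<And>m. m \<le> g m" "i \<le> j"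
  shows "(g ^^ i) x \<le> (g ^^ j) x"
  by (rule lift_Suc_mono_le[of "\<lambda>i. (g ^^ i) x"]) (simp_all add: assms)

lemma approx_fixpoints_infdist_sq_le:
  assumes "J p = p" "2 * norm (x\<^sub>0 - p) \<le> real N"
  shows "(infdist x\<^sub>0 (approx_fixpoints J p N m))\<^sup>2 \<le> (real N / 2)\<^sup>2"
proof -
  have "(infdist x\<^sub>0 (approx_fixpoints J p N m))\<^sup>2 \<le> (norm (x\<^sub>0 - p))\<^sup>2"
    using infdist_sq_le[OF fixpoint_in_approx_fixpoints[of J p, OF assms(1)]] by (simp add: dist_norm)
  also have "\<dots> \<le> (real N / 2)\<^sup>2" using assms(2) by (intro power_mono) auto
  finally show ?thesis .
qed

lemma lipschitz_metastable_projection: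
  fixes J :: "'a::real_inner \<Rightarrow> 'a"
  assumes J: "1-lipschitz_on UNIV J" "J p = p" and "N \<noteq> 0" and "2 * norm (x\<^sub>0 - p) \<le> real N"
  shows "\<exists>n \<le> 24 * N * (((w_fun f N) ^^ (4 * N^4 * (k + 1)\<^sup>2)) 0 + 1)\<^sup>2.
    \<exists>x\<in>approx_fixpoints J p N (f n). \<forall>y\<in>approx_fixpoints J p N n.
      inner (x\<^sub>0 - x) (y - x) \<le> 1 / (real k + 1)"
proof -
  define d where "d m = (infdist x\<^sub>0 (approx_fixpoints J p N m))\<^sup>2" for m
  define w where "w = w_fun f N"
  define R where "R = 4 * N^4 * (k + 1)\<^sup>2"
  define c where "c = 1 / (16 * (real N)\<^sup>2 * (real k + 1)\<^sup>2)"
  have w: "24 * N * (m + 1)\<^sup>2 \<le> w m" "f (24 * N * (m + 1)\<^sup>2) \<le> w m" for m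
    by (simp_all add: w_def w_fun_def)
  have w_infl: "m \<le> w m" for m
  proof -
    have "m \<le> (m + 1)\<^sup>2" by (simp add: power2_eq_square)
    also have "\<dots> \<le> 24 * N * (m + 1)\<^sup>2" using \<open>N \<noteq> 0\<close> by simp
    finally show ?thesis using w(1)[of m] by linarith
  qed
  have "real R * c = (real N / 2)\<^sup>2"
  proof -
    define K where "K = real k + 1"
    have "K \<noteq> 0" by (simp add: K_def)
    have "real R * c = 4 * (real N)^4 * K\<^sup>2 / (16 * (real N)\<^sup>2 * K\<^sup>2)"
      by (simp add: R_def c_def K_def add.commute)
    also have "\<dots> = (real N / 2)\<^sup>2"
      using \<open>N \<noteq> 0\<close> \<open>K \<noteq> 0\<close> by (simp add: field_simps power2_eq_square power4_eq_xxxx)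
    finally show ?thesis .
  qed
  then have "d ((w ^^ R) 0) - d ((w ^^ 0) 0) \<le> real R * c"
    using approx_fixpoints_infdist_sq_le[of J p, OF J(2) assms(4)] zero_le_power2
    unfolding d_def by (smt (verit))
  moreover have "0 < R" using \<open>N \<noteq> 0\<close> by (simp add: R_def)
  ultimately obtain i where "i < R" and gap: "d ((w ^^ Suc i) 0) - d ((w ^^ i) 0) \<le> c"
    using ex_small_increment[where a = "\<lambda>i. d ((w ^^ i) 0)"] by blast
  define m n where "m = (w ^^ i) 0" and "n = 24 * N * (m + 1)\<^sup>2"
  obtain x where "x \<in> approx_fixpoints J p N (w m)"
    and x: "\<forall>y\<in>approx_fixpoints J p N n. inner (x\<^sub>0 - x) (y - x) \<le> 1 / (real k + 1)"
    using approx_fixpoint_near_projection[OF J \<open>N \<noteq> 0\<close>, of n m "w m" x\<^sub>0 k] gap w(1)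
    by (auto simp: n_def m_def d_def c_def)
  moreover have "approx_fixpoints J p N (w m) \<subseteq> approx_fixpoints J p N (f n)"
    using w(2) by (intro approx_fixpoints_antimono) (simp add: n_def)
  moreover have "n \<le> 24 * N * ((w ^^ R) 0 + 1)\<^sup>2"
    using funpow_le_funpow_of_inflationary[OF w_infl, of i R 0] \<open>i < R\<close>
    by (simp add: n_def m_def power_mono)
  ultimately show ?thesis unfolding w_def R_def using x by blast
qed

theorem mainTheorem3:
  fixes A :: "'a::{real_inner, complete_space} \<Rightarrow> 'a set"
    and x0 p :: 'a and N :: nat
  assumes "maximal_monotone A"
    and "zeros A \<noteq> {}"
    and "p \<in> zeros A"
    and "N \<noteq> 0"
    and "real N \<ge> 2 * norm (x0 - p)"
  shows "\<forall>(k::nat) (f::nat \<Rightarrow> nat). mono f \<longrightarrow>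
    (\<exists>n. n \<le> 24 * N * (((w_fun f N) ^^ (4 * N^4 * (k + 1)^2)) 0 + 1)^2 \<and>
      (\<exists>x \<in> cball p (real N).
         norm (resolvent A x - x) \<le> 1 / (real (f n) + 1) \<and>
         (\<forall>y \<in> cball p (real N).
            norm (resolvent A y - y) \<le> 1 / (real n + 1) \<longrightarrow>
            inner (x0 - x) (y - x) \<le> 1 / (real k + 1))))"
proof -
  have "resolvent A p = p"
    using assms(1,3) by (intro resolvent_zero) (simp_all add: maximal_monotone_def)
  note lipschitz_metastable_projection[OF resolvent_lipschitz[OF assms(1)] this assms(4,5)]
  then show ?thesis unfolding approx_fixpoints_def by blast
qed

end
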